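(* Let $k\ge1$ be an integer and $a,b,c\in\mathbb{C}$ with $a-b,\ a-c,\ a-b+1,\ a-c+1\notin\{0,-1,-2,\dots\}$, $b+c+k\neq0$, and $\mathrm{Re}(a-2b-2c-2k)>1$. Define $$G_k(a,b,c)={}_3F_2\!\left(\left.\begin{array}{c}a,\ b+k,\ c+k\\ a-b+1,\ a-c+1\end{array}\right|1\right).$$ Then $$G_{k+1}(a,b,c)=\frac{a\,[a-1-2(b+c+k)]}{k\,(b+c+k)}\,G_k(a+1,b+1,c+1)-\frac{(a-b)(a-c)}{k\,(b+c+k)}\,G_k(a-1,b,c).$$
   Context: ${}_3F_2(a_1,a_2,a_3;b_1,b_2;1)=\sum_{m\ge0}\frac{(a_1)_m(a_2)_m(a_3)_m}{m!\,(b_1)_m(b_2)_m}$ with $(\alpha)_m=\Gamma(\alpha+m)/\Gamma(\alpha)$, absolutely convergent when $\mathrm{Re}(b_1+b_2-a_1-a_2-a_3)>0$. Note $G_k(a+1,b+1,c+1)={}_3F_2(a+1,b+k+1,c+k+1;a-b+1,a-c+1;1)$ and $G_k(a-1,b,c)={}_3F_2(a-1,b+k,c+k;a-b,a-c;1)$. *)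

theory Defs
  imports "HOL-Analysis.Analysis"
begin

text \<open>Generalized hypergeometric series 3F2 evaluated at 1, as the sum of the series
  (the theorem's hypotheses guarantee absolute convergence of every instance used).\<close>
definition hyp3F2_1 :: "complex \<Rightarrow> complex \<Rightarrow> complex \<Rightarrow> complex \<Rightarrow> complex \<Rightarrow> complex" where
  "hyp3F2_1 a1 a2 a3 b1 b2 =
     (\<Sum>m. pochhammer a1 m * pochhammer a2 m * pochhammer a3 m /
           (fact m * pochhammer b1 m * pochhammer b2 m))"

definition G :: "nat \<Rightarrow> complex \<Rightarrow> complex \<Rightarrow> complex \<Rightarrow> complex" where
  "G k a b c = hyp3F2_1 a (b + of_nat k) (c + of_nat k) (a - b + 1) (a - c + 1)"

end

theory Submission
  imports Defs
begin

text \<open>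
  Write \<open>t\<^sub>n\<close>, \<open>u\<^sub>n\<close>, \<open>v\<^sub>n\<close> for the summands of \<open>G\<^sub>k\<^sub>+\<^sub>1(a,b,c)\<close>, \<open>G\<^sub>k(a+1,b+1,c+1)\<close>
  and \<open>G\<^sub>k(a-1,b,c)\<close>. Each of \<open>u\<^sub>n\<close> and \<open>v\<^sub>n\<close> is a rational multiple of \<open>t\<^sub>n\<close> or \<open>t\<^sub>n\<^sub>-\<^sub>1\<close>,
  and the combination \<open>k S t\<^sub>n - a (a - 1 - 2S) u\<^sub>n + (a - b)(a - c) v\<^sub>n\<close> (with \<open>S = b + c + k\<close>)
  telescopes: it equals \<open>R\<^sub>n\<^sub>+\<^sub>1 - R\<^sub>n\<close> with \<open>R\<^sub>n = \<sigma>(n) t\<^sub>n\<^sub>-\<^sub>1\<close> for an explicit quadratic \<open>\<sigma>\<close>.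
  Since \<open>t\<^sub>n = O(n\<^sup>-\<^sup>1\<^sup>-\<^sup>s)\<close> with \<open>s = Re(a - 2b - 2c - 2k) > 1\<close>, \<open>R\<^sub>n \<rightarrow> 0\<close>, so summing
  the combination gives zero, which is the claimed relation after division by \<open>k S\<close>.
\<close>

definition hyp3F2_term :: "complex \<Rightarrow> complex \<Rightarrow> complex \<Rightarrow> complex \<Rightarrow> complex \<Rightarrow> nat \<Rightarrow> complex" where
  "hyp3F2_term a1 a2 a3 b1 b2 m = pochhammer a1 m * pochhammer a2 m * pochhammer a3 m /
     (fact m * pochhammer b1 m * pochhammer b2 m)"

lemma hyp3F2_1_eq_suminf: "hyp3F2_1 a1 a2 a3 b1 b2 = (\<Sum>m. hyp3F2_term a1 a2 a3 b1 b2 m)"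
  unfolding hyp3F2_1_def hyp3F2_term_def ..

lemma hyp3F2_term_0 [simp]: "hyp3F2_term a1 a2 a3 b1 b2 0 = 1"
  by (simp add: hyp3F2_term_def)

lemma pochhammer_neq_0_if_not_nonpos_Int: "z \<notin> \<int>\<^sub>\<le>\<^sub>0 \<Longrightarrow> pochhammer (z::complex) n \<noteq> 0"
  using pochhammer_eq_0_imp_nonpos_Int by blast

lemma hyp3F2_term_Suc_eq_rGamma_series:
  assumes "b1 \<notin> \<int>\<^sub>\<le>\<^sub>0" "b2 \<notin> \<int>\<^sub>\<le>\<^sub>0" "n > 0"
  shows "hyp3F2_term a1 a2 a3 b1 b2 (Suc n) =
     rGamma_series a1 n * rGamma_series a2 n * rGamma_series a3 n / (rGamma_series b1 n * rGamma_series b2 n)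
     / of_nat (Suc n) * exp ((a1 + a2 + a3 - b1 - b2) * of_real (ln (of_nat n)))"
proof -
  define L where "L = (of_real (ln (of_nat n)) :: complex)"
  have "exp ((a1 + a2 + a3 - b1 - b2) * L) =
      exp (a1 * L) * exp (a2 * L) * exp (a3 * L) / (exp (b1 * L) * exp (b2 * L))"
    by (simp add: algebra_simps exp_add exp_diff flip: exp_add exp_diff)
  moreover have "pochhammer b1 (Suc n) \<noteq> 0" "pochhammer b2 (Suc n) \<noteq> 0"
    using assms(1,2) by (simp_all add: pochhammer_neq_0_if_not_nonpos_Int)
  ultimately show ?thesis
    unfolding hyp3F2_term_def rGamma_series_def L_def[symmetric]
    using assms(3) by (simp add: field_simps fact_Suc del: of_nat_Suc)
qed

text \<open>The quotient of \<open>rGamma_series\<close> values converges, so only the factor \<open>n\<^sup>a\<^sup>1\<^sup>+\<^sup>a\<^sup>2\<^sup>+\<^sup>a\<^sup>3\<^sup>-\<^sup>b\<^sup>1\<^sup>-\<^sup>b\<^sup>2 / (n+1)\<close> matters.\<close>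

lemma hyp3F2_term_bound:
  assumes "b1 \<notin> \<int>\<^sub>\<le>\<^sub>0" "b2 \<notin> \<int>\<^sub>\<le>\<^sub>0"
  obtains K where "\<And>n. n \<ge> 1 \<Longrightarrow>
    norm (hyp3F2_term a1 a2 a3 b1 b2 (Suc n)) \<le> K * real n powr (- 1 - Re (b1 + b2 - a1 - a2 - a3))"
proof -
  define s where "s = Re (b1 + b2 - a1 - a2 - a3)"
  define \<rho> where "\<rho> n = rGamma_series a1 n * rGamma_series a2 n * rGamma_series a3 n /
    (rGamma_series b1 n * rGamma_series b2 n)" for n
  have "\<rho> \<longlonglongrightarrow> rGamma a1 * rGamma a2 * rGamma a3 / (rGamma b1 * rGamma b2)"
    unfolding \<rho>_def using assms by (intro tendsto_intros) (auto simp: rGamma_eq_zero_iff)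
  then obtain K where K: "\<And>n. norm (\<rho> n) \<le> K"
    by (metis BseqE convergentI convergent_imp_Bseq)
  have "norm (hyp3F2_term a1 a2 a3 b1 b2 (Suc n)) \<le> K * real n powr (- 1 - s)" if "n \<ge> 1" for n
  proof -
    have "norm (hyp3F2_term a1 a2 a3 b1 b2 (Suc n)) = norm (\<rho> n) / real (Suc n) * real n powr (- s)"
      using hyp3F2_term_Suc_eq_rGamma_series[OF assms, of n] that
      by (simp add: \<rho>_def norm_mult norm_divide s_def powr_def del: of_nat_Suc)
    also have "\<dots> \<le> K / real n * real n powr (- s)"
      using that K[of n] order_trans[OF norm_ge_zero K] by (intro mult_right_mono frac_le) auto
    also have "\<dots> = K * real n powr (- 1 - s)"
      using that by (simp add: powr_diff powr_minus divide_simps)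
    finally show ?thesis .
  qed
  then show ?thesis using that s_def by blast
qed

lemma summable_hyp3F2_term:
  assumes "b1 \<notin> \<int>\<^sub>\<le>\<^sub>0" "b2 \<notin> \<int>\<^sub>\<le>\<^sub>0" "Re (b1 + b2 - a1 - a2 - a3) > 0"
  shows "summable (hyp3F2_term a1 a2 a3 b1 b2)"
proof -
  obtain K where K: "\<And>n. n \<ge> 1 \<Longrightarrow>
      norm (hyp3F2_term a1 a2 a3 b1 b2 (Suc n)) \<le> K * real n powr (- 1 - Re (b1 + b2 - a1 - a2 - a3))"
    using hyp3F2_term_bound[OF assms(1,2)] by blast
  have "summable (\<lambda>n. K * real n powr (- 1 - Re (b1 + b2 - a1 - a2 - a3)))"
    using assms(3) by (intro summable_mult) (simp add: summable_real_powr_iff)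
  then have "summable (\<lambda>n. hyp3F2_term a1 a2 a3 b1 b2 (Suc n))"
    by (rule summable_comparison_test_ev[rotated]) (use K in \<open>auto simp: eventually_at_top_linorder\<close>)
  then show ?thesis by (simp add: summable_Suc_iff)
qed

lemma hyp3F2_term_poly_tendsto_zero:
  assumes "b1 \<notin> \<int>\<^sub>\<le>\<^sub>0" "b2 \<notin> \<int>\<^sub>\<le>\<^sub>0" "Re (b1 + b2 - a1 - a2 - a3) > 1" "j \<le> 2"
  shows "(\<lambda>n. of_nat n ^ j * hyp3F2_term a1 a2 a3 b1 b2 (Suc n)) \<longlonglongrightarrow> 0"
proof -
  define s where "s = Re (b1 + b2 - a1 - a2 - a3)"
  obtain K where K: "\<And>n. n \<ge> 1 \<Longrightarrow>
      norm (hyp3F2_term a1 a2 a3 b1 b2 (Suc n)) \<le> K * real n powr (- 1 - s)"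
    using hyp3F2_term_bound[OF assms(1,2)] unfolding s_def by blast
  have "\<forall>\<^sub>F n in sequentially.
      norm (of_nat n ^ j * hyp3F2_term a1 a2 a3 b1 b2 (Suc n)) \<le> K * real n powr (1 - s)"
    using eventually_ge_at_top[of "1::nat"]
  proof eventually_elim
    case (elim n)
    have "norm (of_nat n ^ j * hyp3F2_term a1 a2 a3 b1 b2 (Suc n))
        \<le> real n ^ 2 * norm (hyp3F2_term a1 a2 a3 b1 b2 (Suc n))"
      using elim assms(4) by (auto simp: norm_mult norm_power intro!: mult_right_mono power_increasing)
    also have "\<dots> \<le> real n ^ 2 * (K * real n powr (- 1 - s))"
      using K[OF elim] by (simp add: mult_left_mono)
    also have "\<dots> = K * real n powr (1 - s)"
    proof -
      have "real n ^ 2 * real n powr (- 1 - s) = real n powr (2 + (- 1 - s))"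
        using elim by (subst powr_add) (simp add: powr_numeral)
      then show ?thesis by (simp add: algebra_simps)
    qed
    finally show ?case .
  qed
  moreover have "(\<lambda>n. K * real n powr (1 - s)) \<longlonglongrightarrow> 0"
    using assms(3) unfolding s_def
    by (intro tendsto_mult_right_zero tendsto_neg_powr filterlim_real_sequentially) auto
  ultimately show ?thesis by (rule Lim_null_comparison)
qed

lemma hyp3F2_term_Suc:
  assumes "b1 \<notin> \<int>\<^sub>\<le>\<^sub>0" "b2 \<notin> \<int>\<^sub>\<le>\<^sub>0"
  shows "hyp3F2_term a1 a2 a3 b1 b2 (Suc p) * (of_nat (Suc p) * (b1 + of_nat p) * (b2 + of_nat p)) =
         hyp3F2_term a1 a2 a3 b1 b2 p * ((a1 + of_nat p) * (a2 + of_nat p) * (a3 + of_nat p))"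
proof -
  have "pochhammer b1 (Suc p) \<noteq> 0" "pochhammer b2 (Suc p) \<noteq> 0"
    using assms by (simp_all add: pochhammer_neq_0_if_not_nonpos_Int)
  then show ?thesis
    unfolding hyp3F2_term_def pochhammer_Suc fact_Suc by (simp add: divide_simps del: of_nat_Suc)
qed

lemma hyp3F2_term_shift_first:
  "a1 * hyp3F2_term (a1 + 1) a2 a3 b1 b2 n = (a1 + of_nat n) * hyp3F2_term a1 a2 a3 b1 b2 n"
proof -
  define Q where "Q = pochhammer a2 n * pochhammer a3 n / (fact n * pochhammer b1 n * pochhammer b2 n)"
  have "a1 * hyp3F2_term (a1 + 1) a2 a3 b1 b2 n = (a1 * pochhammer (a1 + 1) n) * Q"
    unfolding hyp3F2_term_def Q_def by (simp add: ac_simps)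
  also have "a1 * pochhammer (a1 + 1) n = pochhammer a1 n * (a1 + of_nat n)"
    by (metis pochhammer_rec pochhammer_Suc)
  also have "pochhammer a1 n * (a1 + of_nat n) * Q = (a1 + of_nat n) * hyp3F2_term a1 a2 a3 b1 b2 n"
    unfolding hyp3F2_term_def Q_def by (simp add: ac_simps)
  finally show ?thesis .
qed

lemma hyp3F2_term_Suc_shift_all:
  assumes "b1 \<notin> \<int>\<^sub>\<le>\<^sub>0" "b2 \<notin> \<int>\<^sub>\<le>\<^sub>0"
  shows "b1 * b2 * of_nat (Suc p) * hyp3F2_term a1 a2 a3 b1 b2 (Suc p) =
         a1 * a2 * a3 * hyp3F2_term (a1 + 1) (a2 + 1) (a3 + 1) (b1 + 1) (b2 + 1) p"
proof -
  have "pochhammer b1 (Suc p) \<noteq> 0" "pochhammer b2 (Suc p) \<noteq> 0"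
    using assms by (simp_all add: pochhammer_neq_0_if_not_nonpos_Int)
  then show ?thesis
    unfolding hyp3F2_term_def pochhammer_rec fact_Suc by (simp add: divide_simps del: of_nat_Suc)
qed

definition G_term :: "complex \<Rightarrow> complex \<Rightarrow> complex \<Rightarrow> complex \<Rightarrow> nat \<Rightarrow> complex" where
  "G_term \<kappa> a b c = hyp3F2_term a (b + \<kappa>) (c + \<kappa>) (a - b + 1) (a - c + 1)"

lemma G_eq_suminf_G_term: "G k a b c = (\<Sum>n. G_term (of_nat k) a b c n)"
  by (simp add: G_def G_term_def hyp3F2_1_eq_suminf)

lemma summable_G_term:
  assumes "a - b + 1 \<notin> \<int>\<^sub>\<le>\<^sub>0" "a - c + 1 \<notin> \<int>\<^sub>\<le>\<^sub>0" "Re (a - 2 * b - 2 * c - 2 * \<kappa>) > - 2"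
  shows "summable (G_term \<kappa> a b c)"
  unfolding G_term_def using assms by (intro summable_hyp3F2_term) auto

lemma G_term_Suc:
  assumes "a - b + 1 \<notin> \<int>\<^sub>\<le>\<^sub>0" "a - c + 1 \<notin> \<int>\<^sub>\<le>\<^sub>0"
  shows "G_term \<kappa> a b c (Suc n) * ((of_nat n + 1) * (a - b + 1 + of_nat n) * (a - c + 1 + of_nat n)) =
         G_term \<kappa> a b c n * ((a + of_nat n) * (b + \<kappa> + of_nat n) * (c + \<kappa> + of_nat n))"
  using hyp3F2_term_Suc[OF assms, of a "b + \<kappa>" "c + \<kappa>" n]
  by (simp add: G_term_def algebra_simps)

lemma G_term_shift_first:
  "a * G_term \<kappa> (a + 1) (b + 1) (c + 1) n = (a + of_nat n) * G_term (\<kappa> + 1) a b c n"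
  using hyp3F2_term_shift_first[of a "b + (\<kappa> + 1)" "c + (\<kappa> + 1)" "a - b + 1" "a - c + 1" n]
  by (simp add: G_term_def algebra_simps)

lemma G_term_Suc_shift_down:
  assumes "a - b \<notin> \<int>\<^sub>\<le>\<^sub>0" "a - c \<notin> \<int>\<^sub>\<le>\<^sub>0"
  shows "(a - b) * (a - c) * (of_nat n + 1) * G_term \<kappa> (a - 1) b c (Suc n) =
         (a - 1) * (b + \<kappa>) * (c + \<kappa>) * G_term (\<kappa> + 1) a b c n"
  using hyp3F2_term_Suc_shift_all[OF assms, of n "a - 1" "b + \<kappa>" "c + \<kappa>"]
  by (simp add: G_term_def algebra_simps)

definition G_cert_factor :: "complex \<Rightarrow> complex \<Rightarrow> complex \<Rightarrow> complex \<Rightarrow> complex \<Rightarrow> complex" where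
  "G_cert_factor \<kappa> a b c m = (m + a - 1) * (m + b + c + 2 * \<kappa>) + (b + \<kappa>) * (c + \<kappa>)"

definition G_certificate :: "complex \<Rightarrow> complex \<Rightarrow> complex \<Rightarrow> complex \<Rightarrow> nat \<Rightarrow> complex" where
  "G_certificate \<kappa> a b c n =
     (if n = 0 then 0 else G_cert_factor \<kappa> a b c (of_nat n) * G_term (\<kappa> + 1) a b c (n - 1))"

lemma G_terms_telescope:
  assumes "a - b \<notin> \<int>\<^sub>\<le>\<^sub>0" "a - c \<notin> \<int>\<^sub>\<le>\<^sub>0"
  shows "\<kappa> * (b + c + \<kappa>) * G_term (\<kappa> + 1) a b c n
         - a * (a - 1 - 2 * (b + c + \<kappa>)) * G_term \<kappa> (a + 1) (b + 1) (c + 1) n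
         + (a - b) * (a - c) * G_term \<kappa> (a - 1) b c n
       = G_certificate \<kappa> a b c (Suc n) - G_certificate \<kappa> a b c n"
proof (cases n)
  case 0
  then show ?thesis by (simp add: G_certificate_def G_cert_factor_def G_term_def algebra_simps)
next
  case (Suc p)
  define t where "t = G_term (\<kappa> + 1) a b c"
  define x where "x = (of_nat p :: complex)"
  have shifted: "a - b + 1 \<notin> \<int>\<^sub>\<le>\<^sub>0" "a - c + 1 \<notin> \<int>\<^sub>\<le>\<^sub>0"
    using assms plus_one_in_nonpos_Ints_imp by blast+
  have "x + 1 \<noteq> 0"
    unfolding x_def by (metis of_nat_Suc add.commute of_nat_eq_0_iff nat.distinct(1))
  moreover have "a - b + 1 + x \<noteq> 0" "a - c + 1 + x \<noteq> 0"
    using shifted unfolding x_def by (metis add_eq_0_iff2 minus_of_nat_in_nonpos_Ints)+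
  ultimately have D_nz: "(x + 1) * (a - b + 1 + x) * (a - c + 1 + x) \<noteq> 0"
    by simp
  have cert: "G_certificate \<kappa> a b c (Suc (Suc p)) = G_cert_factor \<kappa> a b c (x + 2) * t (Suc p)"
    "G_certificate \<kappa> a b c (Suc p) = G_cert_factor \<kappa> a b c (x + 1) * t p"
    by (simp_all add: G_certificate_def t_def x_def algebra_simps)
  have "(\<kappa> * (b + c + \<kappa>) * t (Suc p)
      - a * (a - 1 - 2 * (b + c + \<kappa>)) * G_term \<kappa> (a + 1) (b + 1) (c + 1) (Suc p)
      + (a - b) * (a - c) * G_term \<kappa> (a - 1) b c (Suc p)
      - (G_cert_factor \<kappa> a b c (x + 2) * t (Suc p) - G_cert_factor \<kappa> a b c (x + 1) * t p))
     * ((x + 1) * (a - b + 1 + x) * (a - c + 1 + x)) = 0"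
    using G_term_Suc[OF shifted, of "\<kappa> + 1" p] G_term_shift_first[of a \<kappa> b c "Suc p"]
      G_term_Suc_shift_down[OF assms, of p \<kappa>]
    unfolding G_cert_factor_def t_def[symmetric] x_def[symmetric] of_nat_Suc
    by algebra
  with D_nz show ?thesis
    unfolding Suc t_def[symmetric] cert by (metis mult_eq_0_iff right_minus_eq)
qed

lemma G_certificate_tendsto_zero:
  assumes "a - b + 1 \<notin> \<int>\<^sub>\<le>\<^sub>0" "a - c + 1 \<notin> \<int>\<^sub>\<le>\<^sub>0" "Re (a - 2 * b - 2 * c - 2 * \<kappa>) > 1"
  shows "G_certificate \<kappa> a b c \<longlonglongrightarrow> 0"
proof -
  define T where "T j n = of_nat n ^ j * G_term (\<kappa> + 1) a b c (Suc n)" for j n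
  have T: "T j \<longlonglongrightarrow> 0" if "j \<le> 2" for j
    unfolding T_def[abs_def] G_term_def
    using assms that by (intro hyp3F2_term_poly_tendsto_zero) auto
  have "G_certificate \<kappa> a b c (Suc (Suc n)) =
      T 2 n + (a + b + c + 2 * \<kappa> + 3) * T 1 n
      + ((a + 1) * (b + c + 2 * \<kappa> + 2) + (b + \<kappa>) * (c + \<kappa>)) * T 0 n" for n
    by (simp add: G_certificate_def G_cert_factor_def T_def algebra_simps power2_eq_square)
  moreover have "(\<lambda>n. T 2 n + (a + b + c + 2 * \<kappa> + 3) * T 1 n
      + ((a + 1) * (b + c + 2 * \<kappa> + 2) + (b + \<kappa>) * (c + \<kappa>)) * T 0 n) \<longlonglongrightarrow> 0"
    using T[of 0] T[of 1] T[of 2] by (auto intro!: tendsto_add_zero tendsto_mult_right_zero)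
  ultimately have "(\<lambda>n. G_certificate \<kappa> a b c (Suc (Suc n))) \<longlonglongrightarrow> 0"
    by simp
  then show ?thesis
    by (rule LIMSEQ_imp_Suc[OF LIMSEQ_imp_Suc])
qed

lemma G_contiguous_relation:
  assumes "a - b \<notin> \<int>\<^sub>\<le>\<^sub>0" "a - c \<notin> \<int>\<^sub>\<le>\<^sub>0" "Re (a - 2 * b - 2 * c - 2 * of_nat k) > 1"
  shows "of_nat k * (b + c + of_nat k) * G (k + 1) a b c
         - a * (a - 1 - 2 * (b + c + of_nat k)) * G k (a + 1) (b + 1) (c + 1)
         + (a - b) * (a - c) * G k (a - 1) b c = 0"
proof -
  define \<kappa> :: complex where "\<kappa> = of_nat k"
  define X where "X n = \<kappa> * (b + c + \<kappa>) * G_term (\<kappa> + 1) a b c n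
      - a * (a - 1 - 2 * (b + c + \<kappa>)) * G_term \<kappa> (a + 1) (b + 1) (c + 1) n
      + (a - b) * (a - c) * G_term \<kappa> (a - 1) b c n" for n
  have shifted: "a - b + 1 \<notin> \<int>\<^sub>\<le>\<^sub>0" "a - c + 1 \<notin> \<int>\<^sub>\<le>\<^sub>0"
    using assms(1,2) plus_one_in_nonpos_Ints_imp by blast+
  have "X = (\<lambda>n. G_certificate \<kappa> a b c (Suc n) - G_certificate \<kappa> a b c n)"
    unfolding X_def using G_terms_telescope[OF assms(1,2)] by blast
  moreover have "G_certificate \<kappa> a b c \<longlonglongrightarrow> 0"
    using shifted assms(3) unfolding \<kappa>_def by (intro G_certificate_tendsto_zero) auto
  ultimately have "X sums 0"
    using telescope_sums[of "G_certificate \<kappa> a b c" 0] by (simp add: G_certificate_def)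
  moreover have "G_term (\<kappa> + 1) a b c sums G (k + 1) a b c"
    "G_term \<kappa> (a + 1) (b + 1) (c + 1) sums G k (a + 1) (b + 1) (c + 1)"
    "G_term \<kappa> (a - 1) b c sums G k (a - 1) b c"
    using assms shifted unfolding \<kappa>_def G_eq_suminf_G_term
    by (auto simp: add.commute intro!: summable_sums summable_G_term)
  then have "X sums (\<kappa> * (b + c + \<kappa>) * G (k + 1) a b c
         - a * (a - 1 - 2 * (b + c + \<kappa>)) * G k (a + 1) (b + 1) (c + 1)
         + (a - b) * (a - c) * G k (a - 1) b c)"
    unfolding X_def by (intro sums_add sums_diff sums_mult)
  ultimately show ?thesis
    unfolding \<kappa>_def using sums_unique2 by blast
qed

theorem mainTheorem10:
  fixes k :: nat and a b c :: complex
  assumes "k \<ge> 1"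
    and "\<forall>n::nat. a - b \<noteq> - of_nat n"
    and "\<forall>n::nat. a - c \<noteq> - of_nat n"
    and "\<forall>n::nat. a - b + 1 \<noteq> - of_nat n"
    and "\<forall>n::nat. a - c + 1 \<noteq> - of_nat n"
    and "b + c + of_nat k \<noteq> 0"
    and "Re (a - 2 * b - 2 * c - 2 * of_nat k) > 1"
  shows "G (k + 1) a b c =
           a * (a - 1 - 2 * (b + c + of_nat k)) / (of_nat k * (b + c + of_nat k)) * G k (a + 1) (b + 1) (c + 1)
         - (a - b) * (a - c) / (of_nat k * (b + c + of_nat k)) * G k (a - 1) b c"
proof -
  \<comment> \<open>The hypotheses on \<open>a - b + 1\<close> and \<open>a - c + 1\<close> follow from those on \<open>a - b\<close>, \<open>a - c\<close>.\<close>
  define S where "S = b + c + of_nat k"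
  have "a - b \<notin> \<int>\<^sub>\<le>\<^sub>0" "a - c \<notin> \<int>\<^sub>\<le>\<^sub>0"
    using assms(2,3) by (auto elim!: nonpos_Ints_cases')
  from G_contiguous_relation[OF this assms(7)]
  have "of_nat k * S * G (k + 1) a b c =
      a * (a - 1 - 2 * S) * G k (a + 1) (b + 1) (c + 1) - (a - b) * (a - c) * G k (a - 1) b c"
    unfolding S_def by (simp add: algebra_simps)
  moreover have "of_nat k * S \<noteq> 0"
    using assms(1,6) by (simp add: S_def)
  ultimately have "G (k + 1) a b c =
      (a * (a - 1 - 2 * S) * G k (a + 1) (b + 1) (c + 1) - (a - b) * (a - c) * G k (a - 1) b c)
      / (of_nat k * S)"
    by (simp add: eq_divide_eq ac_simps)
  then show ?thesis
    unfolding S_def[symmetric] by (simp add: diff_divide_distrib)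
qed

end
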